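(* Let $G\ge 2$, $\Delta\in(0,1/2]$, and $p_t\in[\Delta,1-\Delta]$. Let $r_{t,1},\dots,r_{t,G}$ be i.i.d. $\mathrm{Bernoulli}(p_t)$, $R=\sum_j r_{t,j}$, $\hat p_t=R/G$, $\mathcal S=\{1\le R\le G-1\}$. For a real constant $c$ let $\tilde p_t=c\,\hat p_t$. Given $\delta\in(0,1)$, define \[ \epsilon_\delta:=\sqrt{\frac{1}{2G}\log\!\left(\frac{2}{\delta\bigl(1-(1-\Delta)^G-\Delta^G\bigr)}\right)}, \] $I_t:=[\hat p_t-\epsilon_\delta,\hat p_t+\epsilon_\delta]\cap[\Delta,1-\Delta]$, and $A(p):=1-(1-p)^G-p^G$. Fix $\epsilon>0$ and define \[ c_{\mathrm{low}}:=\sup_{p\in I_t}\frac{(p-\epsilon)A(p)}{p(1-p^{G-1})},\qquad c_{\mathrm{high}}:=\inf_{p\in I_t}\frac{(p+\epsilon)A(p)}{p(1-p^{G-1})}. \] Then, with probability at least $1-\delta$ conditional on $\mathcal S$ (over the draw of $\hat p_t$ determining $I_t$, $c_{\mathrm{low}}$, $c_{\mathrm{high}}$), every constant $c\in(c_{\mathrm{low}},c_{\mathrm{high}})$ satisfies $\mathbb E[\tilde p_t\mid\mathcal S]=c\,\mathbb E[\hat p_t\mid\mathcal S]\in(p_t-\epsilon,\ p_t+\epsilon)$.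
   Context: Binary-reward group setting: $G$ i.i.d. Bernoulli$(p_t)$ rewards for a prompt with expected reward $p_t$; $\hat p_t$ is the empirical group baseline; $\tilde p_t=c\hat p_t$ is a rescaled ("rectified") baseline; $\mathcal S$ is the non-degenerate event. *)

theory Defs
  imports "HOL-Probability.Probability"
begin

definition rewards :: "nat \<Rightarrow> real \<Rightarrow> (nat \<Rightarrow> bool) pmf" where
  "rewards G p = Pi_pmf {..<G} False (\<lambda>_. bernoulli_pmf p)"

definition Rsum :: "nat \<Rightarrow> (nat \<Rightarrow> bool) \<Rightarrow> nat" where
  "Rsum G r = card {j \<in> {..<G}. r j}"

definition phat :: "nat \<Rightarrow> (nat \<Rightarrow> bool) \<Rightarrow> real" where
  "phat G r = real (Rsum G r) / real G"

definition nondeg :: "nat \<Rightarrow> (nat \<Rightarrow> bool) set" where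
  "nondeg G = {r. 1 \<le> Rsum G r \<and> Rsum G r \<le> G - 1}"

definition Afun :: "nat \<Rightarrow> real \<Rightarrow> real" where
  "Afun G q = 1 - (1 - q) ^ G - q ^ G"

definition eps_delta :: "nat \<Rightarrow> real \<Rightarrow> real \<Rightarrow> real" where
  "eps_delta G \<Delta> \<delta> = sqrt (1 / (2 * real G) * ln (2 / (\<delta> * (1 - (1 - \<Delta>) ^ G - \<Delta> ^ G))))"

definition Iint :: "nat \<Rightarrow> real \<Rightarrow> real \<Rightarrow> (nat \<Rightarrow> bool) \<Rightarrow> real set" where
  "Iint G \<Delta> \<delta> r = {phat G r - eps_delta G \<Delta> \<delta> .. phat G r + eps_delta G \<Delta> \<delta>} \<inter> {\<Delta> .. 1 - \<Delta>}"

definition c_low :: "nat \<Rightarrow> real \<Rightarrow> real \<Rightarrow> real \<Rightarrow> (nat \<Rightarrow> bool) \<Rightarrow> real" where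
  "c_low G \<Delta> \<delta> \<epsilon> r =
     (SUP q \<in> Iint G \<Delta> \<delta> r. (q - \<epsilon>) * Afun G q / (q * (1 - q ^ (G - 1))))"

definition c_high :: "nat \<Rightarrow> real \<Rightarrow> real \<Rightarrow> real \<Rightarrow> (nat \<Rightarrow> bool) \<Rightarrow> real" where
  "c_high G \<Delta> \<delta> \<epsilon> r =
     (INF q \<in> Iint G \<Delta> \<delta> r. (q + \<epsilon>) * Afun G q / (q * (1 - q ^ (G - 1))))"

end

theory Submission
  imports Defs
begin

text \<open>
  Given the non-degenerate event S, the number of successes R is binomial conditioned on
  {1..G-1}, hence E[phat | S] = m(p) := p (1 - p^(G-1)) / A(p) (here nondeg_mean G p), and
  c m(p) lies in (p - \<epsilon>, p + \<epsilon>) iff (p - \<epsilon>) / m(p) < c < (p + \<epsilon>) / m(p).  These two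
  bounds are the functions whose sup and inf over I_t define c_low and c_high, evaluated at p;
  so the claim holds whenever p \<in> I_t, in particular whenever |phat - p| < \<epsilon>_\<delta>.  Hoeffding
  bounds the probability of the opposite event by 2 exp(-2 G \<epsilon>_\<delta>^2) = \<delta> A(\<Delta>), and
  conditioning on S divides it by P(S) = A(p) \<ge> A(\<Delta>), since A is concave and symmetric
  about 1/2.
\<close>

lemma concave_on_Afun: "concave_on {0..1} (Afun G)"
proof (rule f''_le0_imp_concave)
  fix q :: real
  show "(Afun G has_real_derivative real G * (1 - q) ^ (G - 1) - real G * q ^ (G - 1)) (at q)"
    unfolding Afun_def by (rule derivative_eq_intros | simp)+
  show "((\<lambda>q. real G * (1 - q) ^ (G - 1) - real G * q ^ (G - 1)) has_real_derivative
          - real G * real (G - 1) * ((1 - q) ^ (G - 2) + q ^ (G - 2))) (at q)"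
    by (rule derivative_eq_intros | simp add: algebra_simps eval_nat_numeral)+
  assume "q \<in> {0..1}"
  then show "- real G * real (G - 1) * ((1 - q) ^ (G - 2) + q ^ (G - 2)) \<le> 0"
    by simp
qed simp

lemma Afun_boundary_le:
  fixes \<Delta> q :: real
  assumes "0 \<le> \<Delta>" "\<Delta> \<le> q" "q \<le> 1 - \<Delta>"
  shows "Afun G \<Delta> \<le> Afun G q"
proof -
  have "concave_on {\<Delta>..1 - \<Delta>} (Afun G)"
    using convex_on_subset[of "{0..1}" "\<lambda>q. - Afun G q" "{\<Delta>..1 - \<Delta>}"] concave_on_Afun assms
    by (simp add: concave_on_def)
  then have "min (Afun G \<Delta>) (Afun G (1 - \<Delta>)) \<le> Afun G q"
    using concave_on_ge_min assms by simp
  then show ?thesis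
    by (simp add: Afun_def)
qed

lemma Afun_pos:
  fixes q :: real
  assumes "0 < q" "q < 1" "2 \<le> G"
  shows "0 < Afun G q"
proof -
  have "q ^ G < q" "(1 - q) ^ G < 1 - q"
    using power_strict_decreasing[of 1 G q] power_strict_decreasing[of 1 G "1 - q"] assms by auto
  then show ?thesis
    by (simp add: Afun_def)
qed

lemma Afun_le_1:
  fixes q :: real
  assumes "0 \<le> q" "q \<le> 1"
  shows "Afun G q \<le> 1"
proof -
  have "0 \<le> q ^ G" "0 \<le> (1 - q) ^ G"
    using assms by simp_all
  then show ?thesis
    by (simp add: Afun_def)
qed

lemma measure_cond_pmf:
  assumes "set_pmf M \<inter> S \<noteq> {}"
  shows "measure_pmf.prob (cond_pmf M S) A = measure_pmf.prob M (S \<inter> A) / measure_pmf.prob M S"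
  using emeasure_measure_pmf_not_zero[OF assms]
  by (simp add: cond_pmf.rep_eq[OF assms] measure_pmf.emeasure_eq_measure)

lemma measure_cond_pmf_le:
  assumes "set_pmf M \<inter> S \<noteq> {}"
  shows "measure_pmf.prob (cond_pmf M S) A \<le> measure_pmf.prob M A / measure_pmf.prob M S"
  unfolding measure_cond_pmf[OF assms]
  by (intro divide_right_mono measure_pmf.finite_measure_mono) auto

lemma expectation_binomial_pmf:
  assumes "p \<in> {0..1}"
  shows "measure_pmf.expectation (binomial_pmf n p) real = real n * p"
proof -
  let ?coins = "Pi_pmf {..<n} False (\<lambda>_. bernoulli_pmf p)"
  let ?heads = "\<lambda>i (f :: nat \<Rightarrow> bool). if f i then 1 else (0 :: real)"
  have count: "real (card {i \<in> {..<n}. f i}) = (\<Sum>i<n. ?heads i f)" for f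
    by (simp add: sum.If_cases Int_def)
  have coin: "measure_pmf.expectation ?coins (?heads i) = p" if "i < n" for i
  proof -
    have "measure_pmf.expectation ?coins (?heads i) =
          measure_pmf.expectation (map_pmf (\<lambda>f. f i) ?coins) (\<lambda>b. if b then 1 else 0)"
      by simp
    also have "map_pmf (\<lambda>f. f i) ?coins = bernoulli_pmf p"
      using that by (simp add: Pi_pmf_component)
    finally show ?thesis
      using assms by simp
  qed
  have "binomial_pmf n p = map_pmf (\<lambda>f. card {i \<in> {..<n}. f i}) ?coins"
    by (rule binomial_pmf_altdef') (use assms in auto)
  then have "measure_pmf.expectation (binomial_pmf n p) real =
             measure_pmf.expectation ?coins (\<lambda>f. real (card {i \<in> {..<n}. f i}))"
    by simp
  also have "\<dots> = measure_pmf.expectation ?coins (\<lambda>f. \<Sum>i<n. ?heads i f)"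
    unfolding count ..
  also have "\<dots> = (\<Sum>i<n. measure_pmf.expectation ?coins (?heads i))"
    by (rule Bochner_Integration.integral_sum) (rule measure_pmf.integrable_const_bound[where B = 1]; simp)
  also have "\<dots> = real n * p"
    using coin by simp
  finally show ?thesis .
qed

lemma sum_atMost_split_ends:
  fixes f :: "nat \<Rightarrow> 'a::comm_monoid_add"
  assumes "1 \<le> n"
  shows "(\<Sum>k\<le>n. f k) = f 0 + (\<Sum>k\<in>{1..n-1}. f k) + f n"
proof -
  have "{..n} = insert 0 (insert n {1..n-1})"
    using assms by auto
  then show ?thesis
    using assms by (simp add: add.commute add.left_commute)
qed

lemma set_pmf_binomial_Int_nondeg:
  assumes "0 < p" "p < 1" "2 \<le> n"
  shows "set_pmf (binomial_pmf n p) \<inter> {1..n-1} \<noteq> {}"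
  using assms by auto

lemma prob_binomial_pmf_nondeg:
  assumes "0 < p" "p < 1" "1 \<le> n"
  shows "measure_pmf.prob (binomial_pmf n p) {1..n-1} = Afun n p"
proof -
  have "1 = (\<Sum>k\<le>n. pmf (binomial_pmf n p) k)"
    by (rule sum_pmf_eq_1[symmetric]) (use assms in auto)
  also have "\<dots> = (1 - p) ^ n + measure_pmf.prob (binomial_pmf n p) {1..n-1} + p ^ n"
    unfolding sum_atMost_split_ends[OF assms(3)] using assms by (simp add: measure_measure_pmf_finite)
  finally show ?thesis
    by (simp add: Afun_def)
qed

definition nondeg_mean :: "nat \<Rightarrow> real \<Rightarrow> real" where
  "nondeg_mean G q = q * (1 - q ^ (G - 1)) / Afun G q"

lemma expectation_cond_binomial_pmf_nondeg:
  assumes "0 < p" "p < 1" "2 \<le> n"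
  shows "measure_pmf.expectation (cond_pmf (binomial_pmf n p) {1..n-1}) real = real n * nondeg_mean n p"
proof -
  let ?B = "binomial_pmf n p"
  have "real n * p = measure_pmf.expectation ?B real"
    using expectation_binomial_pmf assms by simp
  also have "\<dots> = (\<Sum>k\<le>n. real k * pmf ?B k)"
    by (rule integral_measure_pmf_real) (use assms in auto)
  also have "\<dots> = (\<Sum>k\<in>{1..n-1}. real k * pmf ?B k) + real n * p ^ n"
    using sum_atMost_split_ends[of n "\<lambda>k. real k * pmf ?B k"] assms by simp
  finally have "(\<Sum>k\<in>{1..n-1}. real k * pmf ?B k) = real n * p - real n * p ^ n"
    by linarith
  also have "p ^ n = p * p ^ (n - 1)"
    using assms by (simp flip: power_Suc)
  finally have sum_nondeg: "(\<Sum>k\<in>{1..n-1}. real k * pmf ?B k) = real n * p * (1 - p ^ (n - 1))"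
    by (simp add: algebra_simps)
  have "measure_pmf.expectation (cond_pmf ?B {1..n-1}) real =
        (\<Sum>k\<in>{1..n-1}. real k * pmf (cond_pmf ?B {1..n-1}) k)"
    by (rule integral_measure_pmf_real) (use set_pmf_binomial_Int_nondeg[OF assms] in auto)
  also have "\<dots> = (\<Sum>k\<in>{1..n-1}. real k * pmf ?B k) / Afun n p"
    using assms prob_binomial_pmf_nondeg[of p n]
    by (simp add: pmf_cond set_pmf_binomial_Int_nondeg sum_divide_distrib)
  also have "\<dots> = real n * nondeg_mean n p"
    unfolding sum_nondeg nondeg_mean_def by simp
  finally show ?thesis .
qed

lemma Rsum_rewards: "p \<in> {0..1} \<Longrightarrow> map_pmf (Rsum G) (rewards G p) = binomial_pmf G p"
  unfolding rewards_def Rsum_def by (rule binomial_pmf_altdef'[symmetric]) auto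

lemma Rsum_cond_rewards_nondeg:
  assumes "0 < p" "p < 1" "2 \<le> G"
  shows "map_pmf (Rsum G) (cond_pmf (rewards G p) (nondeg G)) = cond_pmf (binomial_pmf G p) {1..G-1}"
proof -
  have nondeg: "nondeg G = Rsum G -` {1..G-1}"
    by (auto simp: nondeg_def)
  have "set_pmf (map_pmf (Rsum G) (rewards G p)) \<inter> {1..G-1} \<noteq> {}"
    using set_pmf_binomial_Int_nondeg[OF assms] Rsum_rewards[of p G] assms by simp
  then have "set_pmf (rewards G p) \<inter> Rsum G -` {1..G-1} \<noteq> {}"
    by auto
  then have "cond_pmf (map_pmf (Rsum G) (rewards G p)) {1..G-1} =
             map_pmf (Rsum G) (cond_pmf (rewards G p) (Rsum G -` {1..G-1}))"
    by (rule cond_map_pmf)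
  then show ?thesis
    using Rsum_rewards[of p G] assms by (simp add: nondeg)
qed

lemma expectation_phat_cond_nondeg:
  assumes "0 < p" "p < 1" "2 \<le> G"
  shows "measure_pmf.expectation (cond_pmf (rewards G p) (nondeg G)) (phat G) = nondeg_mean G p"
proof -
  have "measure_pmf.expectation (cond_pmf (rewards G p) (nondeg G)) (phat G) =
        measure_pmf.expectation (cond_pmf (binomial_pmf G p) {1..G-1}) (\<lambda>k. real k / real G)"
    unfolding Rsum_cond_rewards_nondeg[OF assms, symmetric] by (simp add: phat_def[abs_def])
  also have "\<dots> = nondeg_mean G p"
    using expectation_cond_binomial_pmf_nondeg[OF assms] assms by simp
  finally show ?thesis .
qed

lemma prob_phat_deviation_cond_nondeg:
  assumes "0 < p" "p < 1" "2 \<le> G" "0 \<le> e"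
  shows "measure_pmf.prob (cond_pmf (rewards G p) (nondeg G)) {r. e \<le> \<bar>phat G r - p\<bar>}
           \<le> 2 * exp (- 2 * real G * e\<^sup>2) / Afun G p"
proof -
  interpret binomial_distribution G p
    by unfold_locales (use assms in auto)
  let ?far = "{k. e \<le> \<bar>real k / real G - p\<bar>}"
  have "measure_pmf.prob (cond_pmf (rewards G p) (nondeg G)) {r. e \<le> \<bar>phat G r - p\<bar>} =
        measure_pmf.prob (cond_pmf (binomial_pmf G p) {1..G-1}) ?far"
    unfolding Rsum_cond_rewards_nondeg[OF assms(1-3), symmetric] by (simp add: phat_def)
  also have "\<dots> \<le> measure_pmf.prob (binomial_pmf G p) ?far / Afun G p"
    using measure_cond_pmf_le[OF set_pmf_binomial_Int_nondeg[OF assms(1-3)]]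
      prob_binomial_pmf_nondeg[of p G] assms by simp
  also have "\<dots> \<le> 2 * exp (- 2 * real G * e\<^sup>2) / Afun G p"
    using prob_abs_ge'[OF _ assms(4)] Afun_pos[OF assms(1-3)] assms by (simp add: divide_right_mono)
  finally show ?thesis .
qed

lemma ln_eps_delta_nonneg:
  assumes "0 < \<delta>" "\<delta> < 1" "0 < Afun G \<Delta>" "Afun G \<Delta> \<le> 1"
  shows "0 \<le> ln (2 / (\<delta> * Afun G \<Delta>))"
proof -
  have "\<delta> * Afun G \<Delta> \<le> \<delta>"
    by (rule mult_left_le) (use assms in auto)
  then have "\<delta> * Afun G \<Delta> \<le> 2"
    using assms by linarith
  then have "1 \<le> 2 / (\<delta> * Afun G \<Delta>)"
    using assms by simp
  then show ?thesis
    by simp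
qed

lemma eps_delta_nonneg:
  assumes "0 < \<delta>" "\<delta> < 1" "0 < Afun G \<Delta>" "Afun G \<Delta> \<le> 1"
  shows "0 \<le> eps_delta G \<Delta> \<delta>"
  using ln_eps_delta_nonneg[OF assms] by (simp add: eps_delta_def Afun_def)

lemma exp_eps_delta:
  assumes "0 < G" "0 < \<delta>" "\<delta> < 1" "0 < Afun G \<Delta>" "Afun G \<Delta> \<le> 1"
  shows "2 * exp (- 2 * real G * (eps_delta G \<Delta> \<delta>)\<^sup>2) = \<delta> * Afun G \<Delta>"
proof -
  have "(eps_delta G \<Delta> \<delta>)\<^sup>2 = ln (2 / (\<delta> * Afun G \<Delta>)) / (2 * real G)"
    using ln_eps_delta_nonneg[OF assms(2-)] by (simp add: eps_delta_def Afun_def)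
  then show ?thesis
    using assms by (simp add: exp_minus)
qed

lemma nondeg_mean_pos:
  assumes "0 < q" "q < 1" "2 \<le> G"
  shows "0 < nondeg_mean G q"
proof -
  have "q ^ (G - 1) < 1"
    using assms by (simp add: power_less_one_iff)
  then show ?thesis
    using assms Afun_pos[OF assms] by (simp add: nondeg_mean_def)
qed

lemma continuous_on_nondeg_mean:
  assumes "S \<subseteq> {0<..<1}" "2 \<le> G"
  shows "continuous_on S (nondeg_mean G)"
proof -
  have "continuous_on S (Afun G)"
    unfolding Afun_def by (intro continuous_intros)
  moreover have "Afun G q \<noteq> 0" if "q \<in> S" for q
    using Afun_pos[of q G] that assms by auto
  ultimately show ?thesis
    unfolding nondeg_mean_def by (intro continuous_intros) auto
qed

lemma cSUP_upper_continuous_on_compact: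
  fixes f :: "'a::topological_space \<Rightarrow> real"
  assumes "compact I" "continuous_on I f" "x \<in> I"
  shows "f x \<le> (SUP y\<in>I. f y)"
  using compact_continuous_image[OF assms(2,1)]
  by (intro cSUP_upper[OF assms(3)] bounded_imp_bdd_above compact_imp_bounded)

lemma cINF_lower_continuous_on_compact:
  fixes f :: "'a::topological_space \<Rightarrow> real"
  assumes "compact I" "continuous_on I f" "x \<in> I"
  shows "(INF y\<in>I. f y) \<le> f x"
  using compact_continuous_image[OF assms(2,1)]
  by (intro cINF_lower[OF _ assms(3)] bounded_imp_bdd_below compact_imp_bounded)

lemma continuous_on_Iint_div_nondeg_mean:
  assumes "2 \<le> G" "0 < \<Delta>"
  shows "continuous_on (Iint G \<Delta> \<delta> r) (\<lambda>q. (q + a) / nondeg_mean G q)"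
proof -
  have "Iint G \<Delta> \<delta> r \<subseteq> {0<..<1}"
    using assms by (auto simp: Iint_def)
  then have "continuous_on (Iint G \<Delta> \<delta> r) (nondeg_mean G)"
    using continuous_on_nondeg_mean assms by blast
  moreover have "nondeg_mean G q \<noteq> 0" if "q \<in> Iint G \<Delta> \<delta> r" for q
    using nondeg_mean_pos[of q G] that assms by (auto simp: Iint_def)
  ultimately show ?thesis
    by (intro continuous_intros) auto
qed

lemma compact_Iint: "compact (Iint G \<Delta> \<delta> r)"
  by (simp add: Iint_def compact_Int)

lemma c_low_ge:
  assumes "2 \<le> G" "0 < \<Delta>" "p \<in> Iint G \<Delta> \<delta> r"
  shows "(p - \<epsilon>) / nondeg_mean G p \<le> c_low G \<Delta> \<delta> \<epsilon> r"
proof -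
  have "(p + - \<epsilon>) / nondeg_mean G p \<le> (SUP q\<in>Iint G \<Delta> \<delta> r. (q + - \<epsilon>) / nondeg_mean G q)"
    by (rule cSUP_upper_continuous_on_compact[OF compact_Iint
          continuous_on_Iint_div_nondeg_mean[OF assms(1,2)] assms(3)])
  also have "\<dots> = c_low G \<Delta> \<delta> \<epsilon> r"
    by (simp add: c_low_def nondeg_mean_def)
  finally show ?thesis
    by simp
qed

lemma c_high_le:
  assumes "2 \<le> G" "0 < \<Delta>" "p \<in> Iint G \<Delta> \<delta> r"
  shows "c_high G \<Delta> \<delta> \<epsilon> r \<le> (p + \<epsilon>) / nondeg_mean G p"
proof -
  have "c_high G \<Delta> \<delta> \<epsilon> r = (INF q\<in>Iint G \<Delta> \<delta> r. (q + \<epsilon>) / nondeg_mean G q)"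
    by (simp add: c_high_def nondeg_mean_def)
  also have "\<dots> \<le> (p + \<epsilon>) / nondeg_mean G p"
    by (rule cINF_lower_continuous_on_compact[OF compact_Iint
          continuous_on_Iint_div_nondeg_mean[OF assms(1,2)] assms(3)])
  finally show ?thesis .
qed

lemma prob_phat_far_cond_nondeg:
  assumes "2 \<le> G" "0 < \<Delta>" "\<Delta> \<le> p" "p \<le> 1 - \<Delta>" "0 < \<delta>" "\<delta> < 1"
  shows "measure_pmf.prob (cond_pmf (rewards G p) (nondeg G))
           {r. eps_delta G \<Delta> \<delta> \<le> \<bar>phat G r - p\<bar>} \<le> \<delta>"
proof -
  have p: "0 < p" "p < 1"
    using assms by auto
  have A\<Delta>: "0 < Afun G \<Delta>" "Afun G \<Delta> \<le> 1" "Afun G \<Delta> \<le> Afun G p"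
    using Afun_pos[of \<Delta> G] Afun_le_1[of \<Delta> G] Afun_boundary_le[of \<Delta> p G] assms by auto
  have "measure_pmf.prob (cond_pmf (rewards G p) (nondeg G)) {r. eps_delta G \<Delta> \<delta> \<le> \<bar>phat G r - p\<bar>}
          \<le> \<delta> * Afun G \<Delta> / Afun G p"
    using prob_phat_deviation_cond_nondeg[OF p assms(1) eps_delta_nonneg[OF assms(5,6) A\<Delta>(1,2)]]
      exp_eps_delta[OF _ assms(5,6) A\<Delta>(1,2)] assms by simp
  also have "\<dots> \<le> \<delta>"
    using A\<Delta> Afun_pos[OF p assms(1)] assms by (simp add: field_simps)
  finally show ?thesis .
qed

lemma mult_nondeg_mean_in_interval:
  assumes "2 \<le> G" "0 < \<Delta>" "p \<in> Iint G \<Delta> \<delta> r"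
    and "c_low G \<Delta> \<delta> \<epsilon> r < c" "c < c_high G \<Delta> \<delta> \<epsilon> r"
  shows "c * nondeg_mean G p \<in> {p - \<epsilon> <..< p + \<epsilon>}"
proof -
  have "0 < p" "p < 1"
    using assms(2,3) by (auto simp: Iint_def)
  then have "0 < nondeg_mean G p"
    using nondeg_mean_pos assms(1) by blast
  moreover have "(p - \<epsilon>) / nondeg_mean G p < c" "c < (p + \<epsilon>) / nondeg_mean G p"
    using c_low_ge[OF assms(1-3)] c_high_le[OF assms(1-3)] assms(4,5)
    by (auto intro: order.strict_trans1 order.strict_trans2)
  ultimately show ?thesis
    by (simp add: field_simps)
qed

theorem lemma1:
  fixes G :: nat and \<Delta> p \<delta> \<epsilon> :: real
  assumes "G \<ge> 2"
    and "0 < \<Delta>" and "\<Delta> \<le> 1 / 2"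
    and "\<Delta> \<le> p" and "p \<le> 1 - \<Delta>"
    and "0 < \<delta>" and "\<delta> < 1"
    and "0 < \<epsilon>"
  shows "measure_pmf.prob (cond_pmf (rewards G p) (nondeg G))
           {\<omega>. \<forall>c::real. c_low G \<Delta> \<delta> \<epsilon> \<omega> < c \<and> c < c_high G \<Delta> \<delta> \<epsilon> \<omega> \<longrightarrow>
                measure_pmf.expectation (cond_pmf (rewards G p) (nondeg G)) (\<lambda>r. c * phat G r)
                  = c * measure_pmf.expectation (cond_pmf (rewards G p) (nondeg G)) (phat G)
              \<and> c * measure_pmf.expectation (cond_pmf (rewards G p) (nondeg G)) (phat G) \<in> {p - \<epsilon> <..< p + \<epsilon>}}
         \<ge> 1 - \<delta>"
proof -
  let ?K = "cond_pmf (rewards G p) (nondeg G)"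
  let ?far = "{r. eps_delta G \<Delta> \<delta> \<le> \<bar>phat G r - p\<bar>}"
  have "c * nondeg_mean G p \<in> {p - \<epsilon> <..< p + \<epsilon>}"
    if "r \<notin> ?far" "c_low G \<Delta> \<delta> \<epsilon> r < c" "c < c_high G \<Delta> \<delta> \<epsilon> r" for r c
    by (rule mult_nondeg_mean_in_interval[OF assms(1,2) _ that(2,3)])
      (use that(1) assms in \<open>auto simp: Iint_def\<close>)
  then have "space ?K - ?far \<subseteq> {\<omega>. \<forall>c::real. c_low G \<Delta> \<delta> \<epsilon> \<omega> < c \<and> c < c_high G \<Delta> \<delta> \<epsilon> \<omega> \<longrightarrow>
                measure_pmf.expectation ?K (\<lambda>r. c * phat G r) = c * measure_pmf.expectation ?K (phat G)
              \<and> c * measure_pmf.expectation ?K (phat G) \<in> {p - \<epsilon> <..< p + \<epsilon>}}"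
    (is "_ \<subseteq> ?good")
    using expectation_phat_cond_nondeg[of p G] assms by auto
  then have "measure_pmf.prob ?K (space ?K - ?far) \<le> measure_pmf.prob ?K ?good"
    by (rule measure_pmf.finite_measure_mono) simp
  moreover have "measure_pmf.prob ?K (space ?K - ?far) = 1 - measure_pmf.prob ?K ?far"
    by (rule measure_pmf.prob_compl) simp
  ultimately show ?thesis
    using prob_phat_far_cond_nondeg[of G \<Delta> p \<delta>] assms by linarith
qed

end
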